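(* Let $(X,\operatorname{d})$ be a bounded, complete metric space equipped with a convex-like structure. If $X$ has finite (Lebesgue) topological covering dimension, then $X$ is second countable.
   Context: Let $\operatorname{Prob}_n$ denote the set of probability measures on $\{1,\dots,n\}$ with the $\ell^1$-metric $\|\mu-\tilde\mu\|=\sum_i|\mu(i)-\tilde\mu(i)|$, and $X^{(n)}$ the $n$-fold Cartesian product of $X$. A bounded metric space $(X,\operatorname{d})$ has a \emph{convex-like structure} if for every $n\in\mathbb N$ and $\mu\in\operatorname{Prob}_n$ there is a continuous map $\gamma_\mu\colon X^{(n)}\to X$ such that: (1) for every permutation $\sigma\in S_n$, $\gamma_\mu(x_1,\dots,x_n)=\gamma_{\mu\circ\sigma}(x_{\sigma(1)},\dots,x_{\sigma(n)})$; (2) if $x_1=x_2$ then $\gamma_\mu(x_1,x_2,\dots,x_n)=\gamma_{\tilde\mu}(x_1,x_3,\dots,x_n)$ where $\tilde\mu(1)=\mu(1)+\mu(2)$ and $\tilde\mu(j)=\mu(j+1)$ for $2\le j\le n-1$ (in particular the unique element of $\operatorname{Prob}_1$ gives the identity map); (3) if $\mu(i)=1$ then $\gamma_\mu(x_1,\dots,x_n)=x_i$; (4) there is a constant $C$ such that $\operatorname{d}(\gamma_\mu(x_1,\dots,x_n),\gamma_{\tilde\mu}(x_1,\dots,x_n))\le C\|\mu-\tilde\mu\|$ for all $x_i$, and $\operatorname{d}(\gamma_\mu(x_1,\dots,x_n),\gamma_\mu(y_1,\dots,y_n))\le\sum_i\mu(i)\operatorname{d}(x_i,y_i)$ for all $x_i,y_i$;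 (5) for all $\nu\in\operatorname{Prob}_2$, $\mu\in\operatorname{Prob}_n$, $\tilde\mu\in\operatorname{Prob}_m$ and points $x_1,\dots,x_n,\tilde x_1,\dots,\tilde x_m$, $\gamma_\nu(\gamma_\mu(x_1,\dots,x_n),\gamma_{\tilde\mu}(\tilde x_1,\dots,\tilde x_m))=\gamma_\eta(x_1,\dots,x_n,\tilde x_1,\dots,\tilde x_m)$, where $\eta(i)=\nu(1)\mu(i)$ for $1\le i\le n$ and $\eta(n+j)=\nu(2)\tilde\mu(j)$ for $1\le j\le m$. *)

theory Defs
  imports "HOL-Analysis.Analysis"
begin

(* Indices are 0-based: {1..n} of the paper is rendered as {..<n}. *)

definition Prob :: "nat \<Rightarrow> (nat \<Rightarrow> real) set" where
  "Prob n = {\<mu>. (\<forall>i<n. 0 \<le> \<mu> i) \<and> (\<Sum>i<n. \<mu> i) = 1}"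

definition l1dist :: "nat \<Rightarrow> (nat \<Rightarrow> real) \<Rightarrow> (nat \<Rightarrow> real) \<Rightarrow> real" where
  "l1dist n \<mu> \<mu>' = (\<Sum>i<n. \<bar>\<mu> i - \<mu>' i\<bar>)"

definition convex_like_structure ::
  "(nat \<Rightarrow> (nat \<Rightarrow> real) \<Rightarrow> (nat \<Rightarrow> 'a::metric_space) \<Rightarrow> 'a) \<Rightarrow> bool" where
  "convex_like_structure \<gamma> \<longleftrightarrow>
     (\<forall>n. \<forall>\<mu>\<in>Prob n.
        continuous_map (product_topology (\<lambda>_. euclidean) {..<n}) euclidean (\<gamma> n \<mu>)) \<and>
     \<comment> \<open>(1) permutation invariance\<close>
     (\<forall>n. \<forall>\<mu>\<in>Prob n. \<forall>\<sigma> x. \<sigma> permutes {..<n} \<longrightarrow>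
        \<gamma> n \<mu> x = \<gamma> n (\<mu> \<circ> \<sigma>) (x \<circ> \<sigma>)) \<and>
     \<comment> \<open>(2) merging equal points\<close>
     (\<forall>n. \<forall>\<mu>\<in>Prob n. \<forall>x. 2 \<le> n \<and> x 0 = x 1 \<longrightarrow>
        \<gamma> n \<mu> x = \<gamma> (n - 1) (\<lambda>j. if j = 0 then \<mu> 0 + \<mu> 1 else \<mu> (j + 1))
                              (\<lambda>j. if j = 0 then x 0 else x (j + 1))) \<and>
     \<comment> \<open>(3) Dirac measures\<close>
     (\<forall>n. \<forall>\<mu>\<in>Prob n. \<forall>x i. i < n \<and> \<mu> i = 1 \<longrightarrow> \<gamma> n \<mu> x = x i) \<and>
     \<comment> \<open>(4) Lipschitz conditions\<close>
     (\<exists>C. \<forall>n. \<forall>\<mu>\<in>Prob n. \<forall>\<mu>'\<in>Prob n. \<forall>x.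
        dist (\<gamma> n \<mu> x) (\<gamma> n \<mu>' x) \<le> C * l1dist n \<mu> \<mu>') \<and>
     (\<forall>n. \<forall>\<mu>\<in>Prob n. \<forall>x y.
        dist (\<gamma> n \<mu> x) (\<gamma> n \<mu> y) \<le> (\<Sum>i<n. \<mu> i * dist (x i) (y i))) \<and>
     \<comment> \<open>(5) associativity\<close>
     (\<forall>\<nu>\<in>Prob 2. \<forall>n m. \<forall>\<mu>\<in>Prob n. \<forall>\<mu>'\<in>Prob m. \<forall>x x'.
        \<gamma> 2 \<nu> (\<lambda>k. if k = 0 then \<gamma> n \<mu> x else \<gamma> m \<mu>' x') =
        \<gamma> (n + m) (\<lambda>k. if k < n then \<nu> 0 * \<mu> k else \<nu> 1 * \<mu>' (k - n))
                  (\<lambda>k. if k < n then x k else x' (k - n)))"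

definition covering_dim_le :: "'a topology \<Rightarrow> nat \<Rightarrow> bool" where
  "covering_dim_le T n \<longleftrightarrow>
     (\<forall>\<U>. finite \<U> \<and> (\<forall>U\<in>\<U>. openin T U) \<and> \<Union>\<U> = topspace T \<longrightarrow>
        (\<exists>\<V>. finite \<V> \<and> (\<forall>V\<in>\<V>. openin T V) \<and> \<Union>\<V> = topspace T \<and>
             (\<forall>V\<in>\<V>. \<exists>U\<in>\<U>. V \<subseteq> U) \<and>
             (\<forall>x\<in>topspace T. card {V\<in>\<V>. x \<in> V} \<le> n + 1)))"

definition finite_covering_dim :: "'a topology \<Rightarrow> bool" where
  "finite_covering_dim T \<longleftrightarrow> (\<exists>n. covering_dim_le T n)"

end

theory Submission
  imports Defs
begin

(* A metric space with a convex-like structure and finite covering dimension is second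
   countable.  Write mix t u v for the mixture
   of u (weight t) and v (weight 1 - t).  The cancellation law
     t * dist x y <= dist (mix t x z) (mix t y z)
   shows that the ray set of a simplex image K -- the points w such that mix t w p lies in K
   for some t > 0 and p in K -- is parametrized Lipschitz-continuously by finitely many real
   numbers, hence is separable.  In a non-separable space one can therefore choose a generic
   sequence a 0, ..., a (n+1), each point outside the ray set of the simplex spanned by the
   previous ones.  The n+2 faces of this simplex are closed without common point, and a
   Sperner-type covering lemma on the cube (from Kuhn's combinatorial lemma) shows that no open
   refinement of the cover by their complements has order at most n. *)

(* A metric space with a countable dense subset is second countable: the balls of radius
   1/(m+1) around the dense points form a countable basis. *)
lemma separable_imp_second_countable:
  fixes D :: "'a::metric_space set"
  assumes "countable D" and "closure D = UNIV"
  shows "second_countable (euclidean :: 'a topology)"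
  unfolding second_countable_def
proof (intro exI conjI allI impI ballI)
  let ?B = "(\<lambda>(d, m). ball d (1 / Suc m)) ` (D \<times> (UNIV :: nat set))"
  show "countable ?B" using assms(1) by auto
  show "openin euclidean V" if "V \<in> ?B" for V using that by auto
  fix U and x :: 'a assume "openin euclidean U \<and> x \<in> U"
  then obtain e where e: "e > 0" "ball x e \<subseteq> U" by (auto simp: open_contains_ball)
  obtain m :: nat where m: "1 / Suc m < e / 2"
    using e by (metis half_gt_zero_iff nat_approx_posE)
  have "x \<in> closure D" using assms(2) by simp
  then obtain d where d: "d \<in> D" "dist d x < 1 / Suc m"
    unfolding closure_approachable by (metis of_nat_0_less_iff zero_less_Suc zero_less_divide_1_iff)
  have "ball d (1 / Suc m) \<subseteq> ball x e"
  proof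
    fix y assume "y \<in> ball d (1 / Suc m)"
    then show "y \<in> ball x e" using d m dist_triangle[of x y d] by (simp add: dist_commute)
  qed
  then show "\<exists>V\<in>?B. x \<in> V \<and> V \<subseteq> U"
    using d e by (intro bexI[of _ "ball d (1 / Suc m)"]) (auto simp: dist_commute)
qed

lemma rational_approximation:
  fixes v :: "'i \<Rightarrow> real"
  assumes "0 < \<delta>"
  shows "\<exists>r. \<forall>i. r i \<in> \<rat> \<and> \<bar>v i - r i\<bar> < \<delta>"
proof -
  have "\<exists>r. r \<in> \<rat> \<and> \<bar>v i - r\<bar> < \<delta>" for i
  proof -
    obtain r where "r \<in> \<rat>" "v i - \<delta> < r" "r < v i + \<delta>"
      using Rats_dense_in_real[of "v i - \<delta>" "v i + \<delta>"] assms by auto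
    then show ?thesis by (intro exI[of _ r]) (auto simp: abs_less_iff)
  qed
  then show ?thesis by metis
qed

lemma separable_countable_union:
  fixes T :: "nat \<Rightarrow> 'a::topological_space set"
  assumes "\<And>j. \<exists>D. countable D \<and> T j \<subseteq> closure D"
  shows "\<exists>D. countable D \<and> (\<Union>j. T j) \<subseteq> closure D"
proof -
  have "\<forall>j. \<exists>D. countable D \<and> T j \<subseteq> closure D" using assms by (intro allI)
  then have "\<exists>D. \<forall>j. countable (D j) \<and> T j \<subseteq> closure (D j)" by (rule choice)
  then obtain D where D: "\<forall>j. countable (D j) \<and> T j \<subseteq> closure (D j)" by (elim exE)
  have "T j \<subseteq> closure (\<Union>j. D j)" for j
  proof -
    have "closure (D j) \<subseteq> closure (\<Union>j. D j)" by (rule closure_mono) blast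
    then show ?thesis using D by blast
  qed
  then have "(\<Union>j. T j) \<subseteq> closure (\<Union>j. D j)" by (rule UN_least)
  moreover have "countable (\<Union>j. D j)" using D by (intro countable_UN) auto
  ultimately show ?thesis by blast
qed

(* If every point of T admits a finite real parameter vector such that distances in T are
   controlled Lipschitz-wise by the parameters, then T lies in the closure of a countable set
   (points with parameters near rational vectors). *)
lemma separable_by_parameters:
  fixes T :: "'a::metric_space set" and P :: "'a \<Rightarrow> ('i \<Rightarrow> real) \<Rightarrow> bool"
  assumes "finite I"
    and param: "\<And>w. w \<in> T \<Longrightarrow> \<exists>v. P w v"
    and lip: "\<And>w w' v v'. w \<in> T \<Longrightarrow> w' \<in> T \<Longrightarrow> P w v \<Longrightarrow> P w' v' \<Longrightarrow>
                dist w w' \<le> L * (\<Sum>i\<in>I. \<bar>v i - v' i\<bar>)"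
  shows "\<exists>D. countable D \<and> T \<subseteq> closure D"
proof -
  obtain h where h: "\<And>w. w \<in> T \<Longrightarrow> P w (h w)" using param by metis
  define Q :: "('i \<Rightarrow> real) set" where "Q = PiE I (\<lambda>_. \<rat>)"
  have "countable Q" unfolding Q_def using \<open>finite I\<close> by (intro countable_PiE) (auto simp: countable_rat)
  define near where "near q l w \<longleftrightarrow> w \<in> T \<and> (\<forall>i\<in>I. \<bar>h w i - q i\<bar> < 1 / Suc l)" for q l w
  define c where "c q l = (SOME w. near q l w)" for q l
  define D where "D = (\<lambda>(q, l). c q l) ` {(q, l). q \<in> Q \<and> (\<exists>w. near q l w)}"
  have "countable D" unfolding D_def
    by (rule countable_image, rule countable_subset[of _ "Q \<times> UNIV"]) (use \<open>countable Q\<close> in auto)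
  moreover have "w \<in> closure D" if w: "w \<in> T" for w
    unfolding closure_approachable
  proof (intro allI impI)
    fix e :: real assume e: "e > 0"
    obtain l :: nat where "max L 0 * (2 * card I) / e < l"
      using reals_Archimedean2 by blast
    then have l: "max L 0 * (2 * card I) / e < Suc l" by simp
    obtain r where r: "\<And>i. r i \<in> \<rat>" "\<And>i. \<bar>h w i - r i\<bar> < 1 / Suc l"
      using rational_approximation[of "1 / Suc l" "h w"] by auto
    define q where "q = restrict r I"
    have "q \<in> Q" unfolding q_def Q_def using r by auto
    have near_w: "near q l w" unfolding near_def q_def using r w by auto
    then have near_c: "near q l (c q l)" unfolding c_def by (rule someI)
    have "c q l \<in> D" unfolding D_def using \<open>q \<in> Q\<close> near_w by auto
    have "dist (c q l) w \<le> L * (\<Sum>i\<in>I. \<bar>h (c q l) i - h w i\<bar>)"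
      using lip h near_c w unfolding near_def by blast
    also have "\<dots> \<le> max L 0 * (\<Sum>i\<in>I. \<bar>h (c q l) i - h w i\<bar>)"
      by (intro mult_right_mono) (auto intro: sum_nonneg)
    also have "(\<Sum>i\<in>I. \<bar>h (c q l) i - h w i\<bar>) \<le> (\<Sum>i\<in>I. 2 / Suc l)"
    proof (rule sum_mono)
      fix i assume "i \<in> I"
      then have "\<bar>h (c q l) i - q i\<bar> < 1 / Suc l" "\<bar>h w i - q i\<bar> < 1 / Suc l"
        using near_c near_w unfolding near_def by auto
      then show "\<bar>h (c q l) i - h w i\<bar> \<le> 2 / Suc l" by linarith
    qed
    also have "max L 0 * (\<Sum>i\<in>I. 2 / Suc l) < e"
      using l e by (simp add: field_simps)
    finally have "dist (c q l) w < e" by (auto simp: mult_left_mono)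
    then show "\<exists>y\<in>D. dist y w < e" using \<open>c q l \<in> D\<close> by blast
  qed
  ultimately show ?thesis by blast
qed

lemma dist_triangle4:
  fixes a b c d :: "'a::metric_space"
  shows "dist a d \<le> dist a b + dist b c + dist c d"
  using dist_triangle[of a d b] dist_triangle[of b d c] by linarith

lemma covering_dim_leE:
  assumes "covering_dim_le T n" and "finite \<U>" and "\<And>U. U \<in> \<U> \<Longrightarrow> openin T U" and "\<Union>\<U> = topspace T"
  obtains \<V> where "finite \<V>" "\<And>V. V \<in> \<V> \<Longrightarrow> openin T V" "\<Union>\<V> = topspace T"
    "\<And>V. V \<in> \<V> \<Longrightarrow> \<exists>U\<in>\<U>. V \<subseteq> U" "\<And>x. x \<in> topspace T \<Longrightarrow> card {V\<in>\<V>. x \<in> V} \<le> n + 1"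
proof -
  have "finite \<U> \<and> (\<forall>U\<in>\<U>. openin T U) \<and> \<Union>\<U> = topspace T \<longrightarrow>
      (\<exists>\<V>. finite \<V> \<and> (\<forall>V\<in>\<V>. openin T V) \<and> \<Union>\<V> = topspace T \<and>
          (\<forall>V\<in>\<V>. \<exists>U\<in>\<U>. V \<subseteq> U) \<and> (\<forall>x\<in>topspace T. card {V\<in>\<V>. x \<in> V} \<le> n + 1))"
    using assms(1) unfolding covering_dim_le_def by (rule spec)
  then have "\<exists>\<V>. finite \<V> \<and> (\<forall>V\<in>\<V>. openin T V) \<and> \<Union>\<V> = topspace T \<and>
          (\<forall>V\<in>\<V>. \<exists>U\<in>\<U>. V \<subseteq> U) \<and> (\<forall>x\<in>topspace T. card {V\<in>\<V>. x \<in> V} \<le> n + 1)"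
    by (rule mp) (use assms(2-4) in blast)
  then obtain \<V> where "finite \<V>" "\<forall>V\<in>\<V>. openin T V" "\<Union>\<V> = topspace T"
    "\<forall>V\<in>\<V>. \<exists>U\<in>\<U>. V \<subseteq> U" "\<forall>x\<in>topspace T. card {V\<in>\<V>. x \<in> V} \<le> n + 1"
    by (elim exE conjE)
  then show ?thesis by (intro that) auto
qed

(* The cube [0,1]^N (only the first N coordinates matter) and the barycentric weights of the
   iterated mixture: weight N i x is the total weight that the point with cube coordinates x puts
   on the i-th vertex, for i <= N.  The i-th face of the simplex is where this weight vanishes. *)
definition cube :: "(nat \<Rightarrow> real) set" where
  "cube = {x. \<forall>k. 0 \<le> x k \<and> x k \<le> 1}"

definition weight :: "nat \<Rightarrow> nat \<Rightarrow> (nat \<Rightarrow> real) \<Rightarrow> real" where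
  "weight N i x = (\<Prod>k\<in>{i..<N}. 1 - x k) * (if i = 0 then 1 else x (i - 1))"

lemma weight_Suc: "i \<le> N \<Longrightarrow> weight (Suc N) i x = (1 - x N) * weight N i x"
  by (simp add: weight_def)

lemma weight_last: "weight (Suc N) (Suc N) x = x N"
  by (simp add: weight_def)

(* A non-vanishing weight forces the boundary conditions needed for Sperner labellings. *)
lemma weight_nonzero:
  assumes "weight N i x \<noteq> 0"
  shows "0 < i \<Longrightarrow> x (i - 1) \<noteq> 0" and "k \<in> {i..<N} \<Longrightarrow> x k \<noteq> 1"
  using assms by (auto simp: weight_def)

lemma compact_cube: "compact cube"
proof -
  have "cube = PiE UNIV (\<lambda>_. {0..1::real})" unfolding cube_def by (auto simp: PiE_def Pi_def)
  moreover have "compactin (product_topology (\<lambda>_. euclidean) UNIV) (PiE UNIV (\<lambda>_. {0..1::real}))"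
    by (simp add: compactin_PiE)
  ultimately show ?thesis by (metis compactin_euclidean_iff euclidean_product_topology)
qed

lemma compact_weight_zero: "compact {x \<in> cube. weight N i x = 0}"
proof -
  have "continuous_on UNIV (weight N i)"
    unfolding weight_def
    by (cases "i = 0") (simp_all, (intro continuous_intros continuous_on_product_coordinates)+)
  then have "closed {x. weight N i x = 0}" by (rule closed_Collect_eq) simp
  then have "compact (cube \<inter> {x. weight N i x = 0})" by (intro compact_Int_closed compact_cube)
  then show ?thesis by (simp add: Int_def)
qed

lemma l1dist_nonneg: "0 \<le> l1dist N x y"
  by (simp add: l1dist_def sum_nonneg)

lemma lipschitz_l1_continuous_on:
  fixes f :: "(nat \<Rightarrow> real) \<Rightarrow> 'b::metric_space"
  assumes lip: "\<And>x y. x \<in> S \<Longrightarrow> y \<in> S \<Longrightarrow> dist (f x) (f y) \<le> L * l1dist N x y"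
  shows "continuous_on S f"
  unfolding continuous_on_def
proof (intro ballI)
  fix x assume x: "x \<in> S"
  have "continuous_on UNIV (\<lambda>y. l1dist N y x)" unfolding l1dist_def
    by (intro continuous_intros continuous_on_product_coordinates)
  then have "((\<lambda>y. l1dist N y x) \<longlongrightarrow> l1dist N x x) (at x within S)"
    by (meson UNIV_I continuous_on_def tendsto_within_subset subset_UNIV)
  then have g0: "((\<lambda>y. l1dist N y x) \<longlongrightarrow> 0) (at x within S)" by (simp add: l1dist_def)
  show "(f \<longlongrightarrow> f x) (at x within S)"
    unfolding tendsto_iff
  proof (intro allI impI)
    fix e :: real assume e: "e > 0"
    have "eventually (\<lambda>y. l1dist N y x < e / (\<bar>L\<bar> + 1)) (at x within S)"
      using g0 e by (intro order_tendstoD(2)) auto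
    moreover have "eventually (\<lambda>y. y \<in> S) (at x within S)"
      by (simp add: eventually_at_filter)
    ultimately show "eventually (\<lambda>y. dist (f y) (f x) < e) (at x within S)"
    proof eventually_elim
      case (elim y)
      have "dist (f y) (f x) \<le> (\<bar>L\<bar> + 1) * l1dist N y x"
        using lip[OF elim(2) x] l1dist_nonneg[of N y x]
        by (smt (verit) mult_right_mono)
      also have "\<dots> < (\<bar>L\<bar> + 1) * (e / (\<bar>L\<bar> + 1))" using elim(1) by (intro mult_strict_left_mono) auto
      finally show ?case by simp
    qed
  qed
qed

(* The grid of mesh 1/p in the cube, with coordinates listed in reverse order to match the
   orientation of Kuhn simplices. *)
definition grid_point :: "nat \<Rightarrow> nat \<Rightarrow> (nat \<Rightarrow> nat) \<Rightarrow> nat \<Rightarrow> real" where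
  "grid_point p N q = (\<lambda>k. real (q (N - 1 - k)) / real p)"

lemma grid_point_cube: "0 < p \<Longrightarrow> \<forall>j. q j \<le> p \<Longrightarrow> grid_point p N q \<in> cube"
  by (auto simp: grid_point_def cube_def field_simps)

(* From a face-avoiding labelling lbl (values <= N) to the labelling of Kuhn's combinatorial lemma:
   its reduced label at q is N - lbl q, and the face condition yields Kuhn's boundary conditions. *)
definition kuhn_label :: "nat \<Rightarrow> nat \<Rightarrow> ((nat \<Rightarrow> nat) \<Rightarrow> nat) \<Rightarrow> (nat \<Rightarrow> nat) \<Rightarrow> nat \<Rightarrow> nat" where
  "kuhn_label p N lbl q j =
     (if j < N - lbl q then 0 else if j = N - lbl q then 1 else if q j = p then 1 else 0)"

lemma reduced_kuhn_label: "reduced N (kuhn_label p N lbl q) = N - lbl q"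
  unfolding reduced_def by (rule Least_equality) (auto simp: kuhn_label_def split: if_splits)

lemma kuhn_label_boundary:
  assumes "0 < p" and grid: "\<forall>j. q j \<le> p" and "j < N"
    and lbl: "lbl q \<le> N" "weight N (lbl q) (grid_point p N q) \<noteq> 0"
  shows "q j = 0 \<Longrightarrow> kuhn_label p N lbl q j = 0" and "q j = p \<Longrightarrow> kuhn_label p N lbl q j = 1"
proof -
  assume "q j = 0"
  have "j \<noteq> N - lbl q"
  proof
    assume "j = N - lbl q"
    then have "0 < lbl q" "N - 1 - (lbl q - 1) = j" using \<open>j < N\<close> lbl(1) by auto
    then have "grid_point p N q (lbl q - 1) = 0" using \<open>q j = 0\<close> by (simp add: grid_point_def)
    then show False using weight_nonzero(1) lbl(2) \<open>0 < lbl q\<close> by blast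
  qed
  then show "kuhn_label p N lbl q j = 0" using \<open>q j = 0\<close> assms(1) by (auto simp: kuhn_label_def)
next
  assume "q j = p"
  have "\<not> j < N - lbl q"
  proof
    assume "j < N - lbl q"
    then have k: "N - 1 - j \<in> {lbl q..<N}" "N - 1 - (N - 1 - j) = j" using \<open>j < N\<close> by auto
    then have "grid_point p N q (N - 1 - j) = 1" using \<open>q j = p\<close> assms(1) by (simp add: grid_point_def)
    then show False using weight_nonzero(2) lbl(2) k(1) by blast
  qed
  then show "kuhn_label p N lbl q j = 1" using \<open>q j = p\<close> by (auto simp: kuhn_label_def)
qed

lemma reflected_labels:
  assumes "\<And>v. v \<in> s \<Longrightarrow> f v \<le> N" and "(\<lambda>v. N - f v) ` s = {..N}"
  shows "f ` s = {..(N::nat)}"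
proof -
  have "i \<in> f ` s" if "i \<le> N" for i
  proof -
    have "N - i \<in> (\<lambda>v. N - f v) ` s" using assms(2) that by simp
    then obtain v where "v \<in> s" "N - i = N - f v" by (rule imageE)
    then have "f v = i" using assms(1)[OF \<open>v \<in> s\<close>] that by linarith
    then show ?thesis using \<open>v \<in> s\<close> by blast
  qed
  then show ?thesis using assms(1) by auto
qed

lemma sperner_weights:
  fixes lbl :: "(nat \<Rightarrow> nat) \<Rightarrow> nat"
  assumes "0 < p"
    and lbl: "\<And>q. \<forall>j. q j \<le> p \<Longrightarrow> lbl q \<le> N \<and> weight N (lbl q) (grid_point p N q) \<noteq> 0"
  shows "\<exists>b u s. kuhn_simplex p N b u s \<and> lbl ` s = {..N}"
proof -
  let ?lab = "kuhn_label p N lbl"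
  have "odd (card {s. ksimplex p N s \<and> (reduced N \<circ> ?lab) ` s = {..N}})"
    by (rule kuhn_combinatorial) (use assms(1) kuhn_label_boundary lbl in auto)
  then have "{s. ksimplex p N s \<and> (reduced N \<circ> ?lab) ` s = {..N}} \<noteq> {}"
    by (rule odd_card_imp_not_empty)
  then obtain s where s: "ksimplex p N s" "(reduced N \<circ> ?lab) ` s = {..N}" by blast
  obtain b u where ks: "kuhn_simplex p N b u s" using s(1) by (auto elim: ksimplex.cases)
  have "lbl v \<le> N" if "v \<in> s" for v
  proof -
    have "\<forall>j. v j \<le> p" using kuhn_simplex.s_le_p[OF ks that] by blast
    then show ?thesis using lbl by blast
  qed
  moreover have "(\<lambda>v. N - lbl v) ` s = {..N}" using s(2) by (simp add: comp_def reduced_kuhn_label)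
  ultimately have "lbl ` s = {..N}" by (rule reflected_labels)
  then show ?thesis using ks by blast
qed

lemma exists_fine_grid:
  assumes "0 < (\<eta>::real)"
  shows "\<exists>p::nat. 0 < p \<and> real N / real p < \<eta>"
proof -
  obtain m :: nat where "N / \<eta> < m" using reals_Archimedean2 by blast
  then have "N < \<eta> * Suc m" using assms by (simp add: field_simps)
  then show ?thesis using assms by (intro exI[of _ "Suc m"]) (simp add: field_simps)
qed

lemma kuhn_simplex_grid_close:
  assumes "kuhn_simplex p N b u s" "0 < p" "v \<in> s"
  shows "l1dist N (grid_point p N v) (grid_point p N b) \<le> N / p"
proof -
  have "\<bar>grid_point p N v k - grid_point p N b k\<bar> \<le> 1 / p" for k
  proof -
    have "b (N - 1 - k) \<le> v (N - 1 - k)" "v (N - 1 - k) \<le> Suc (b (N - 1 - k))"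
      using kuhn_simplex.base_le[OF assms(1,3)] kuhn_simplex.le_Suc_base[OF assms(1,3)] by auto
    then have "\<bar>real (v (N - 1 - k)) - real (b (N - 1 - k))\<bar> \<le> 1" by linarith
    then show ?thesis using assms(2)
      by (simp add: grid_point_def diff_divide_distrib[symmetric] divide_right_mono)
  qed
  then show ?thesis
    unfolding l1dist_def
    using sum_mono[of "{..<N}" "\<lambda>k. \<bar>grid_point p N v k - grid_point p N b k\<bar>" "\<lambda>_. 1 / p"] by simp
qed

(* Proof: label each grid point by a face missed by a set containing its eta-neighbourhood;
   the base vertex of a fully labelled Kuhn simplex lies in all N+1 chosen sets. *)
lemma cube_cover_order:
  fixes W :: "'j \<Rightarrow> (nat \<Rightarrow> real) set"
  assumes "finite J" and "0 < \<eta>"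
    and lebesgue: "\<And>x. x \<in> cube \<Longrightarrow> \<exists>j\<in>J. \<forall>y\<in>cube. l1dist N x y < \<eta> \<longrightarrow> y \<in> W j"
    and avoid: "\<And>j. j \<in> J \<Longrightarrow> \<exists>i\<le>N. \<forall>x\<in>cube. weight N i x = 0 \<longrightarrow> x \<notin> W j"
  shows "\<exists>x\<in>cube. Suc N \<le> card {j\<in>J. x \<in> W j}"
proof -
  obtain p :: nat where p: "0 < p" "N / p < \<eta>" using exists_fine_grid[OF \<open>0 < \<eta>\<close>, of N] by blast
  let ?g = "grid_point p N"
  have "\<exists>j. j \<in> J \<and> (\<forall>y\<in>cube. l1dist N (?g q) y < \<eta> \<longrightarrow> y \<in> W j)"
    if "\<forall>j. q j \<le> p" for q
    using lebesgue[OF grid_point_cube[OF p(1) that]] by blast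
  then obtain cell where cell: "\<And>q. \<forall>j. q j \<le> p \<Longrightarrow>
      cell q \<in> J \<and> (\<forall>y\<in>cube. l1dist N (?g q) y < \<eta> \<longrightarrow> y \<in> W (cell q))"
    by metis
  obtain avoided where avoided: "\<And>j. j \<in> J \<Longrightarrow>
      avoided j \<le> N \<and> (\<forall>x\<in>cube. weight N (avoided j) x = 0 \<longrightarrow> x \<notin> W j)"
    using avoid by metis
  have labelling: "avoided (cell q) \<le> N \<and> weight N (avoided (cell q)) (?g q) \<noteq> 0"
    if "\<forall>j. q j \<le> p" for q
  proof -
    have "?g q \<in> W (cell q)" using cell[OF that] grid_point_cube[OF p(1) that]
      by (simp add: l1dist_def \<open>0 < \<eta>\<close>)
    then show ?thesis using avoided cell[OF that] grid_point_cube[OF p(1) that] by blast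
  qed
  obtain b u s where ks: "kuhn_simplex p N b u s" and labels: "(\<lambda>q. avoided (cell q)) ` s = {..N}"
    using sperner_weights[OF p(1) labelling] by blast
  interpret ks: kuhn_simplex p N b u s by (fact ks)
  have grid: "\<forall>j. v j \<le> p" if "v \<in> s" for v using ks.s_le_p[OF that] by blast
  have base_in: "?g b \<in> W (cell v)" if "v \<in> s" for v
  proof -
    have "l1dist N (?g v) (?g b) < \<eta>" using kuhn_simplex_grid_close[OF ks p(1) that] p(2) by linarith
    then show ?thesis using cell[OF grid[OF that]] grid_point_cube[OF p(1) grid[OF ks.base_in_s]] by blast
  qed
  have "Suc N = card ((\<lambda>q. avoided (cell q)) ` s)" using labels by simp
  also have "\<dots> \<le> card (cell ` s)"
    using card_image_le[of "cell ` s" avoided] by (simp add: ks.s_eq image_comp comp_def)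
  also have "\<dots> \<le> card {j\<in>J. ?g b \<in> W j}"
  proof (rule card_mono)
    show "cell ` s \<subseteq> {j\<in>J. ?g b \<in> W j}" using cell grid base_in by blast
  qed (use \<open>finite J\<close> in simp)
  finally show ?thesis using grid_point_cube[OF p(1) grid[OF ks.base_in_s]] by blast
qed

(* The iterates of s |-> 2s/(1+s) starting in (0,1] stay in [t,1] and converge to 1; they drive
   the cancellation argument. *)
lemma doubling_iterates:
  fixes t :: real
  assumes "0 < t" "t \<le> 1"
  defines "s \<equiv> \<lambda>k. ((\<lambda>s. 2 * s / (1 + s)) ^^ k) t"
  shows "t \<le> s k" and "s k \<le> 1" and "s \<longlonglongrightarrow> 1"
proof -
  have bounds: "t \<le> s k \<and> s k \<le> 1 \<and> 1 - s k \<le> (1 - t) * (1 / (1 + t)) ^ k" for k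
  proof (induction k)
    case 0 then show ?case using assms by (simp add: s_def)
  next
    case (Suc k)
    have sk: "t \<le> s k" "s k \<le> 1" "1 - s k \<le> (1 - t) * (1 / (1 + t)) ^ k" using Suc by auto
    have pos: "0 < 1 + s k" using sk assms by linarith
    have step: "s (Suc k) = 2 * s k / (1 + s k)" by (simp add: s_def)
    have "t * s k \<le> 1 * s k" using sk assms by (intro mult_right_mono) auto
    then have "t * (1 + s k) \<le> 2 * s k" using sk by (simp add: algebra_simps)
    then have "t \<le> s (Suc k)" using pos by (simp add: step pos_le_divide_eq)
    moreover have "s (Suc k) \<le> 1" using sk pos by (simp add: step pos_divide_le_eq)
    moreover have "1 - s (Suc k) \<le> (1 - t) * (1 / (1 + t)) ^ Suc k"
    proof -
      have alg: "1 - 2 * r / (1 + r) = (1 - r) / (1 + r)" if "0 < 1 + r" for r :: real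
        using that by (simp add: field_simps)
      have "1 - s (Suc k) = (1 - s k) / (1 + s k)" unfolding step by (rule alg[OF pos])
      also have "\<dots> \<le> (1 - s k) / (1 + t)" using sk assms by (intro divide_left_mono) auto
      also have "\<dots> \<le> (1 - t) * (1 / (1 + t)) ^ k / (1 + t)" using sk assms by (intro divide_right_mono) auto
      also have "\<dots> = (1 - t) * (1 / (1 + t)) ^ Suc k" by simp
      finally show ?thesis .
    qed
    ultimately show ?case by blast
  qed
  then show "t \<le> s k" "s k \<le> 1" by auto
  have "(\<lambda>k. (1 - t) * (1 / (1 + t)) ^ k) \<longlonglongrightarrow> (1 - t) * 0"
    using assms by (intro tendsto_intros LIMSEQ_power_zero) auto
  then have geometric: "(\<lambda>k. (1 - t) * (1 / (1 + t)) ^ k) \<longlonglongrightarrow> 0" by simp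
  have "\<forall>k. 0 \<le> 1 - s k" "\<forall>k. 1 - s k \<le> (1 - t) * (1 / (1 + t)) ^ k"
    using bounds by auto
  then have "(\<lambda>k. 1 - s k) \<longlonglongrightarrow> 0"
    by (intro tendsto_sandwich[OF always_eventually always_eventually tendsto_const geometric])
  then have "(\<lambda>k. 1 - (1 - s k)) \<longlonglongrightarrow> 1 - 0" by (intro tendsto_intros)
  then show "s \<longlonglongrightarrow> 1" by simp
qed

definition pair :: "'b \<Rightarrow> 'b \<Rightarrow> nat \<Rightarrow> 'b" where
  "pair u v = (\<lambda>k. if k = 0 then u else v)"

definition triple :: "'b \<Rightarrow> 'b \<Rightarrow> 'b \<Rightarrow> nat \<Rightarrow> 'b" where
  "triple u v w = (\<lambda>k. if k = 0 then u else if k = 1 then v else w)"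

lemma pair_Prob: "0 \<le> t \<Longrightarrow> t \<le> 1 \<Longrightarrow> pair t (1 - t) \<in> Prob 2"
  by (simp add: Prob_def pair_def numeral_2_eq_2)

lemma triple_Prob: "0 \<le> a \<Longrightarrow> 0 \<le> b \<Longrightarrow> 0 \<le> c \<Longrightarrow> a + b + c = 1 \<Longrightarrow> triple a b c \<in> Prob 3"
  by (simp add: Prob_def triple_def numeral_3_eq_3 less_Suc_eq)

lemma nested_weights_Prob:
  assumes "0 \<le> \<alpha>" "\<alpha> \<le> 1" "0 \<le> t" "t \<le> 1"
  shows "triple \<alpha> ((1 - \<alpha>) * t) ((1 - \<alpha>) * (1 - t)) \<in> Prob 3"
  using assms by (intro triple_Prob mult_nonneg_nonneg) (auto simp: algebra_simps)

locale convex_like =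
  fixes \<gamma> :: "nat \<Rightarrow> (nat \<Rightarrow> real) \<Rightarrow> (nat \<Rightarrow> 'a::metric_space) \<Rightarrow> 'a"
  assumes convex_like: "convex_like_structure \<gamma>"
begin

lemma gamma_perm [rule_format]:
  "\<forall>n. \<forall>\<mu>\<in>Prob n. \<forall>\<sigma> x. \<sigma> permutes {..<n} \<longrightarrow> \<gamma> n \<mu> x = \<gamma> n (\<mu> \<circ> \<sigma>) (x \<circ> \<sigma>)"
  using convex_like unfolding convex_like_structure_def by (elim conjE)

lemma gamma_merge [rule_format]:
  "\<forall>n. \<forall>\<mu>\<in>Prob n. \<forall>x. 2 \<le> n \<and> x 0 = x 1 \<longrightarrow>
     \<gamma> n \<mu> x = \<gamma> (n - 1) (\<lambda>j. if j = 0 then \<mu> 0 + \<mu> 1 else \<mu> (j + 1))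
                        (\<lambda>j. if j = 0 then x 0 else x (j + 1))"
  using convex_like unfolding convex_like_structure_def by (elim conjE)

lemma gamma_dirac [rule_format]:
  "\<forall>n. \<forall>\<mu>\<in>Prob n. \<forall>x i. i < n \<and> \<mu> i = 1 \<longrightarrow> \<gamma> n \<mu> x = x i"
  using convex_like unfolding convex_like_structure_def by (elim conjE)

lemma gamma_dist_points [rule_format]:
  "\<forall>n. \<forall>\<mu>\<in>Prob n. \<forall>x y. dist (\<gamma> n \<mu> x) (\<gamma> n \<mu> y) \<le> (\<Sum>i<n. \<mu> i * dist (x i) (y i))"
  using convex_like unfolding convex_like_structure_def by (elim conjE)

lemma gamma_assoc [rule_format]:
  "\<forall>\<nu>\<in>Prob 2. \<forall>n m. \<forall>\<mu>\<in>Prob n. \<forall>\<mu>'\<in>Prob m. \<forall>x x'.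
     \<gamma> 2 \<nu> (\<lambda>k. if k = 0 then \<gamma> n \<mu> x else \<gamma> m \<mu>' x') =
     \<gamma> (n + m) (\<lambda>k. if k < n then \<nu> 0 * \<mu> k else \<nu> 1 * \<mu>' (k - n))
               (\<lambda>k. if k < n then x k else x' (k - n))"
  using convex_like unfolding convex_like_structure_def by (elim conjE)

lemma gamma_dist_weights_ex:
  "\<exists>C\<ge>0. \<forall>n. \<forall>\<mu>\<in>Prob n. \<forall>\<mu>'\<in>Prob n. \<forall>x. dist (\<gamma> n \<mu> x) (\<gamma> n \<mu>' x) \<le> C * l1dist n \<mu> \<mu>'"
proof -
  obtain C where C: "\<forall>n. \<forall>\<mu>\<in>Prob n. \<forall>\<mu>'\<in>Prob n. \<forall>x. dist (\<gamma> n \<mu> x) (\<gamma> n \<mu>' x) \<le> C * l1dist n \<mu> \<mu>'"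
    using convex_like unfolding convex_like_structure_def by (elim conjE exE)
  have "C * l1dist n \<mu> \<mu>' \<le> max C 0 * l1dist n \<mu> \<mu>'" for n \<mu> \<mu>'
    using l1dist_nonneg by (intro mult_right_mono) auto
  then show ?thesis
    using C by (intro exI[of _ "max C 0"] conjI allI ballI) (simp_all, meson order_trans)
qed

definition C :: real where
  "C = (SOME C. C \<ge> 0 \<and> (\<forall>n. \<forall>\<mu>\<in>Prob n. \<forall>\<mu>'\<in>Prob n. \<forall>x.
          dist (\<gamma> n \<mu> x) (\<gamma> n \<mu>' x) \<le> C * l1dist n \<mu> \<mu>'))"

lemma C_nonneg: "0 \<le> C"
  and gamma_dist_weights: "\<mu> \<in> Prob n \<Longrightarrow> \<mu>' \<in> Prob n \<Longrightarrow> dist (\<gamma> n \<mu> x) (\<gamma> n \<mu>' x) \<le> C * l1dist n \<mu> \<mu>'"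
  using someI_ex[OF gamma_dist_weights_ex] unfolding C_def by blast+

lemma gamma_eqI:
  assumes "\<mu> \<in> Prob n" "\<mu>' \<in> Prob n"
    and "\<And>i. i < n \<Longrightarrow> \<mu> i = \<mu>' i" "\<And>i. i < n \<Longrightarrow> x i = y i"
  shows "\<gamma> n \<mu> x = \<gamma> n \<mu>' y"
proof -
  have "\<gamma> n \<mu> x = \<gamma> n \<mu> y" using gamma_dist_points[OF assms(1), of x y] assms(4) by simp
  also have "\<dots> = \<gamma> n \<mu>' y" using gamma_dist_weights[OF assms(1,2), of y] assms(3) by (simp add: l1dist_def)
  finally show ?thesis .
qed

definition mix :: "real \<Rightarrow> 'a \<Rightarrow> 'a \<Rightarrow> 'a" where
  "mix t u v = \<gamma> 2 (pair t (1 - t)) (pair u v)"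

lemma mix_1: "mix 1 u v = u"
  unfolding mix_def using gamma_dirac[OF pair_Prob[of 1], of 0] by (simp add: pair_def)

lemma mix_0: "mix 0 u v = v"
  unfolding mix_def using gamma_dirac[OF pair_Prob[of 0], of 1] by (simp add: pair_def)

lemma mix_dist_right: "0 \<le> t \<Longrightarrow> t \<le> 1 \<Longrightarrow> dist (mix t u v) (mix t u v') \<le> (1 - t) * dist v v'"
  unfolding mix_def using gamma_dist_points[OF pair_Prob, of t "pair u v" "pair u v'"]
  by (simp add: pair_def numeral_2_eq_2)

lemma mix_dist_weight:
  "0 \<le> t \<Longrightarrow> t \<le> 1 \<Longrightarrow> 0 \<le> s \<Longrightarrow> s \<le> 1 \<Longrightarrow> dist (mix t u v) (mix s u v) \<le> 2 * C * \<bar>t - s\<bar>"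
  unfolding mix_def using gamma_dist_weights[OF pair_Prob pair_Prob, of t s]
  by (simp add: pair_def numeral_2_eq_2 l1dist_def abs_minus_commute algebra_simps)

lemma mix_dist_weight_right:
  assumes "0 \<le> t" "t \<le> 1" "0 \<le> s" "s \<le> 1"
  shows "dist (mix t u v) (mix s u v') \<le> dist v v' + 2 * C * \<bar>t - s\<bar>"
proof -
  have "dist (mix t u v) (mix s u v') \<le> dist (mix t u v) (mix t u v') + dist (mix t u v') (mix s u v')"
    by (rule dist_triangle)
  also have "\<dots> \<le> (1 - t) * dist v v' + 2 * C * \<bar>t - s\<bar>"
    using mix_dist_right[of t u v v'] mix_dist_weight[of t s u v'] assms by (intro add_mono) auto
  also have "\<dots> \<le> dist v v' + 2 * C * \<bar>t - s\<bar>"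
    using assms by (simp add: mult_left_le_one_le)
  finally show ?thesis .
qed

(* Nested mixtures are three-point mixtures (associativity); merging equal points and permuting
   points then give the two identities used for cancellation. *)
lemma mix_mix:
  assumes "0 \<le> \<alpha>" "\<alpha> \<le> 1" "0 \<le> t" "t \<le> 1"
  shows "mix \<alpha> x (mix t y z) = \<gamma> 3 (triple \<alpha> ((1 - \<alpha>) * t) ((1 - \<alpha>) * (1 - t))) (triple x y z)"
proof -
  have x: "\<gamma> 1 (\<lambda>_. 1) (\<lambda>_. x) = x" using gamma_dirac[of "\<lambda>_. 1" 1 0] by (simp add: Prob_def)
  have "mix \<alpha> x (mix t y z) = \<gamma> 2 (pair \<alpha> (1 - \<alpha>)) (\<lambda>k. if k = 0 then \<gamma> 1 (\<lambda>_. 1) (\<lambda>_. x) else mix t y z)"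
    unfolding mix_def pair_def by (simp only: x)
  also have "\<dots> = \<gamma> 3 (\<lambda>k. if k < 1 then pair \<alpha> (1 - \<alpha>) 0 * 1 else pair \<alpha> (1 - \<alpha>) 1 * pair t (1 - t) (k - 1))
                         (\<lambda>k. if k < 1 then x else pair y z (k - 1))"
    using gamma_assoc[OF pair_Prob _ pair_Prob, of \<alpha> "\<lambda>_. 1" 1 t "\<lambda>_. x" "pair y z"] assms
    unfolding mix_def by (simp add: Prob_def numeral_3_eq_3)
  also have "\<dots> = \<gamma> 3 (triple \<alpha> ((1 - \<alpha>) * t) ((1 - \<alpha>) * (1 - t))) (triple x y z)"
  proof (rule gamma_eqI)
    show "triple \<alpha> ((1 - \<alpha>) * t) ((1 - \<alpha>) * (1 - t)) \<in> Prob 3"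
      using assms by (rule nested_weights_Prob)
    then show "(\<lambda>k. if k < 1 then pair \<alpha> (1 - \<alpha>) 0 * 1 else pair \<alpha> (1 - \<alpha>) 1 * pair t (1 - t) (k - 1)) \<in> Prob 3"
      by (simp add: Prob_def triple_def pair_def numeral_3_eq_3 less_Suc_eq)
  qed (auto simp: triple_def pair_def numeral_3_eq_3 less_Suc_eq)
  finally show ?thesis .
qed

lemma mix_mix_same:
  assumes "0 \<le> \<alpha>" "\<alpha> \<le> 1" "0 \<le> t" "t \<le> 1"
  shows "mix \<alpha> x (mix t x z) = mix (\<alpha> + (1 - \<alpha>) * t) x z"
proof -
  let ?w = "triple \<alpha> ((1 - \<alpha>) * t) ((1 - \<alpha>) * (1 - t))"
  have w: "?w \<in> Prob 3" using assms by (rule nested_weights_Prob)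
  have "mix \<alpha> x (mix t x z) = \<gamma> 3 ?w (triple x x z)" using assms by (rule mix_mix)
  also have "\<dots> = \<gamma> 2 (\<lambda>j. if j = 0 then ?w 0 + ?w 1 else ?w (j + 1))
                        (\<lambda>j. if j = 0 then triple x x z 0 else triple x x z (j + 1))"
    using gamma_merge[OF w, of "triple x x z"] by (simp add: triple_def)
  also have "\<dots> = mix (\<alpha> + (1 - \<alpha>) * t) x z"
    unfolding mix_def
  proof (rule gamma_eqI)
    have "0 \<le> (1 - \<alpha>) * t" "(1 - \<alpha>) * t \<le> 1 - \<alpha>"
      using assms by (simp_all add: mult_left_le)
    then show "pair (\<alpha> + (1 - \<alpha>) * t) (1 - (\<alpha> + (1 - \<alpha>) * t)) \<in> Prob 2"
      using assms by (intro pair_Prob) auto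
    then show "(\<lambda>j. if j = 0 then ?w 0 + ?w 1 else ?w (j + 1)) \<in> Prob 2"
      by (simp add: Prob_def pair_def triple_def numeral_2_eq_2 less_Suc_eq algebra_simps)
  qed (auto simp: pair_def triple_def numeral_2_eq_2 less_Suc_eq algebra_simps)
  finally show ?thesis .
qed

lemma mix_mix_swap:
  assumes "0 \<le> \<alpha>" "\<alpha> \<le> 1" "0 \<le> t" "t \<le> 1" and balanced: "\<alpha> = (1 - \<alpha>) * t"
  shows "mix \<alpha> x (mix t y z) = mix \<alpha> y (mix t x z)"
proof -
  let ?w = "triple \<alpha> ((1 - \<alpha>) * t) ((1 - \<alpha>) * (1 - t))"
  let ?\<sigma> = "Transposition.transpose (0::nat) 1"
  have w: "?w \<in> Prob 3" using assms(1-4) by (rule nested_weights_Prob)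
  have "?\<sigma> permutes {..<3}" by (rule permutes_swap_id) auto
  have "mix \<alpha> x (mix t y z) = \<gamma> 3 ?w (triple x y z)" using assms(1-4) by (rule mix_mix)
  also have "\<dots> = \<gamma> 3 (?w \<circ> ?\<sigma>) (triple x y z \<circ> ?\<sigma>)" by (rule gamma_perm[OF w \<open>?\<sigma> permutes {..<3}\<close>])
  also have "\<dots> = \<gamma> 3 ?w (triple y x z)"
  proof -
    have "?w \<circ> ?\<sigma> = ?w" using balanced by (auto simp: triple_def transpose_def)
    moreover have "triple x y z \<circ> ?\<sigma> = triple y x z" by (auto simp: triple_def transpose_def)
    ultimately show ?thesis by simp
  qed
  also have "\<dots> = mix \<alpha> y (mix t x z)" using assms(1-4) by (rule mix_mix[symmetric])
  finally show ?thesis .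
qed

(* With u = mix t x z and v = mix t y z, re-mixing with weight t/(1+t) yields mix (2t/(1+t)) x z
   and mix (2t/(1+t)) y z, and the swap identity shows these are at distance at most (2/(1+t)) *
   dist u v. *)
lemma mix_cancel_step:
  assumes "0 < t" "t \<le> 1"
  shows "dist (mix (2 * t / (1 + t)) x z) (mix (2 * t / (1 + t)) y z) \<le> 2 / (1 + t) * dist (mix t x z) (mix t y z)"
proof -
  define \<alpha> where "\<alpha> = t / (1 + t)"
  have "1 - \<alpha> = 1 / (1 + t)" using assms by (simp add: \<alpha>_def field_simps)
  then have \<alpha>: "0 \<le> \<alpha>" "\<alpha> \<le> 1" "\<alpha> = (1 - \<alpha>) * t" "1 - \<alpha> = 1 / (1 + t)"
    using assms by (simp_all add: \<alpha>_def)
  have "\<alpha> + (1 - \<alpha>) * t = 2 * \<alpha>" using \<alpha>(3) by linarith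
  also have "\<dots> = 2 * t / (1 + t)" by (simp add: \<alpha>_def)
  finally have merged: "\<alpha> + (1 - \<alpha>) * t = 2 * t / (1 + t)" .
  define u where "u = mix t x z"
  define v where "v = mix t y z"
  have same_x: "mix \<alpha> x u = mix (2 * t / (1 + t)) x z"
    unfolding u_def merged[symmetric] using assms by (intro mix_mix_same \<alpha>(1,2)) auto
  have same_y: "mix \<alpha> y v = mix (2 * t / (1 + t)) y z"
    unfolding v_def merged[symmetric] using assms by (intro mix_mix_same \<alpha>(1,2)) auto
  have swap: "mix \<alpha> x v = mix \<alpha> y u"
    unfolding u_def v_def by (rule mix_mix_swap[OF \<alpha>(1,2) _ _ \<alpha>(3)]) (use assms in auto)
  have "dist (mix \<alpha> x u) (mix \<alpha> y v) \<le> dist (mix \<alpha> x u) (mix \<alpha> x v) + dist (mix \<alpha> x v) (mix \<alpha> y v)"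
    by (rule dist_triangle)
  also have "\<dots> \<le> (1 - \<alpha>) * dist u v + (1 - \<alpha>) * dist u v"
    using mix_dist_right[OF \<alpha>(1,2), of x u v] mix_dist_right[OF \<alpha>(1,2), of y u v] swap by simp
  finally have "dist (mix \<alpha> x u) (mix \<alpha> y v) \<le> 2 * ((1 - \<alpha>) * dist u v)" by simp
  then show ?thesis using same_x same_y \<alpha>(4) unfolding u_def v_def by simp
qed

(* Cancellation law.  Along the iterates s_k of s |-> 2s/(1+s) the ratio dist (mix s x z) (mix s y
   z) / s does not increase, and s_k tends to 1 where the distance is dist x y. *)
lemma mix_cancel:
  assumes "0 < t" "t \<le> 1"
  shows "t * dist x y \<le> dist (mix t x z) (mix t y z)"
proof -
  define E where "E r = dist (mix r x z) (mix r y z)" for r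
  define s where "s k = ((\<lambda>s. 2 * s / (1 + s)) ^^ k) t" for k
  have s: "t \<le> s k" "s k \<le> 1" "s \<longlonglongrightarrow> 1" for k
    using doubling_iterates[OF assms] unfolding s_def by auto
  have ratio: "E (s k) / s k \<le> E t / t" for k
  proof (induction k)
    case 0 then show ?case by (simp add: s_def)
  next
    case (Suc k)
    have pos: "0 < s k" using s(1)[of k] assms by linarith
    have s_Suc: "s (Suc k) = 2 * s k / (1 + s k)" by (simp add: s_def)
    have "E (s (Suc k)) \<le> 2 / (1 + s k) * E (s k)"
      unfolding E_def s_Suc using mix_cancel_step[of "s k"] pos s(2)[of k] by simp
    also have "\<dots> = s (Suc k) * (E (s k) / s k)"
      using pos by (simp add: s_Suc field_simps add_pos_pos)
    finally have "E (s (Suc k)) / s (Suc k) \<le> E (s k) / s k"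
      using pos s(1)[of "Suc k"] assms by (simp add: pos_divide_le_eq mult.commute)
    then show ?case using Suc.IH by simp
  qed
  have approx: "dist x y \<le> E t / t + 4 * C * (1 - s k)" for k
  proof -
    have near1: "dist (mix 1 w z) (mix (s k) w z) \<le> 2 * C * (1 - s k)" for w
      using mix_dist_weight[of 1 "s k" w z] s(1,2)[of k] assms by simp
    have "dist x y = E 1" by (simp add: E_def mix_1)
    also have "\<dots> \<le> E (s k) + 4 * C * (1 - s k)"
      using near1[of x] near1[of y] dist_triangle4[where a = "mix 1 x z" and b = "mix (s k) x z" and c = "mix (s k) y z" and d = "mix 1 y z"]
        dist_commute[of "mix (s k) y z" "mix 1 y z"]
      unfolding E_def by linarith
    also have "E (s k) \<le> s k * (E t / t)" using ratio[of k] s(1)[of k] assms by (simp add: field_simps)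
    also have "\<dots> \<le> E t / t" using s(1,2)[of k] assms by (intro mult_left_le_one_le) (auto simp: E_def)
    finally show ?thesis by simp
  qed
  have "(\<lambda>k. E t / t + 4 * C * (1 - s k)) \<longlonglongrightarrow> E t / t + 4 * C * (1 - 1)"
    by (intro tendsto_intros s(3))
  then have "dist x y \<le> E t / t" using approx by (auto intro: LIMSEQ_le_const)
  then show ?thesis using assms by (simp add: E_def field_simps)
qed

end

definition params :: "real \<Rightarrow> (nat \<Rightarrow> real) \<Rightarrow> (nat \<Rightarrow> real) \<Rightarrow> (bool \<times> nat) option \<Rightarrow> real" where
  "params t x x' = (\<lambda>j. case j of None \<Rightarrow> t | Some (b, i) \<Rightarrow> if b then x' i else x i)"

definition param_index :: "nat \<Rightarrow> (bool \<times> nat) option set" where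
  "param_index k = insert None (Some ` (UNIV \<times> {..<k}))"

lemma finite_param_index: "finite (param_index k)"
  by (simp add: param_index_def)

lemma params_l1:
  "(\<Sum>j\<in>param_index k. \<bar>params t x x' j - params s y y' j\<bar>) = \<bar>t - s\<bar> + l1dist k x y + l1dist k x' y'"
  by (simp add: param_index_def params_def sum.reindex sum.cartesian_product' UNIV_bool l1dist_def)

context convex_like
begin

(* The iterated mixture map of a sequence of points a: the cube parametrizes the "simplex" spanned
   by a 0, ..., a k, with barycentric weights given by weight k. *)
primrec iter_mix :: "(nat \<Rightarrow> 'a) \<Rightarrow> nat \<Rightarrow> (nat \<Rightarrow> real) \<Rightarrow> 'a" where
  "iter_mix a 0 x = a 0"
| "iter_mix a (Suc k) x = mix (x k) (a (Suc k)) (iter_mix a k x)"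

definition simplex_image :: "(nat \<Rightarrow> 'a) \<Rightarrow> nat \<Rightarrow> 'a set" where
  "simplex_image a k = iter_mix a k ` cube"

definition face :: "(nat \<Rightarrow> 'a) \<Rightarrow> nat \<Rightarrow> nat \<Rightarrow> 'a set" where
  "face a N i = iter_mix a N ` {x \<in> cube. weight N i x = 0}"

lemma iter_mix_cong: "(\<And>i. i \<le> k \<Longrightarrow> a i = b i) \<Longrightarrow> iter_mix a k x = iter_mix b k x"
  by (induction k) auto

lemma iter_mix_dist:
  "x \<in> cube \<Longrightarrow> y \<in> cube \<Longrightarrow> dist (iter_mix a k x) (iter_mix a k y) \<le> 2 * C * l1dist k x y"
proof (induction k)
  case 0 then show ?case by (simp add: l1dist_def)
next
  case (Suc k)
  have "dist (iter_mix a (Suc k) x) (iter_mix a (Suc k) y) \<le> dist (iter_mix a k x) (iter_mix a k y) + 2 * C * \<bar>x k - y k\<bar>"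
    using Suc.prems by (simp, intro mix_dist_weight_right) (auto simp: cube_def)
  also have "\<dots> \<le> 2 * C * l1dist k x y + 2 * C * \<bar>x k - y k\<bar>"
    using Suc by simp
  finally show ?case by (simp add: l1dist_def algebra_simps)
qed

lemma compact_simplex_image: "compact (simplex_image a k)"
  unfolding simplex_image_def
  by (intro compact_continuous_image compact_cube lipschitz_l1_continuous_on[OF iter_mix_dist])

lemma closed_face: "closed (face a N i)"
proof -
  have "continuous_on cube (iter_mix a N)" by (rule lipschitz_l1_continuous_on[OF iter_mix_dist])
  then have "compact (face a N i)" unfolding face_def
    by (rule compact_continuous_image[OF continuous_on_subset compact_weight_zero]) auto
  then show ?thesis by (rule compact_imp_closed)
qed

definition ray_set :: "'a set \<Rightarrow> 'a set" where
  "ray_set H = {w. \<exists>t. 0 < t \<and> t \<le> 1 \<and> (\<exists>p\<in>H. mix t w p \<in> H)}"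

lemma ray_dist:
  assumes "0 < t" "t \<le> 1" "0 \<le> s" "s \<le> 1"
    and "mix t w p = q" "mix s w' p' = q'"
  shows "t * dist w w' \<le> dist q q' + dist p p' + 2 * C * \<bar>t - s\<bar>"
proof -
  have "t * dist w w' \<le> dist (mix t w p) (mix t w' p)" using assms(1,2) by (rule mix_cancel)
  also have "\<dots> \<le> dist q q' + dist (mix s w' p') (mix t w' p)"
    using assms(5,6) dist_triangle by metis
  also have "dist (mix s w' p') (mix t w' p) \<le> dist p p' + 2 * C * \<bar>t - s\<bar>"
    using mix_dist_weight_right[of s t w' p' p] assms(1-4) by (simp add: dist_commute abs_minus_commute)
  finally show ?thesis by simp
qed

lemma ray_param_dist:
  assumes "0 < t" "t \<le> 1" "0 \<le> s" "s \<le> 1" "x \<in> cube" "x' \<in> cube" "y \<in> cube" "y' \<in> cube"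
    and "mix t w (iter_mix a k x) = iter_mix a k x'" "mix s w' (iter_mix a k y) = iter_mix a k y'"
  shows "t * dist w w' \<le> 2 * C * (\<Sum>j\<in>param_index k. \<bar>params t x x' j - params s y y' j\<bar>)"
proof -
  have "t * dist w w' \<le> dist (iter_mix a k x') (iter_mix a k y') + dist (iter_mix a k x) (iter_mix a k y)
      + 2 * C * \<bar>t - s\<bar>"
    using assms(1-4,9,10) by (rule ray_dist)
  also have "\<dots> \<le> 2 * C * l1dist k x' y' + 2 * C * l1dist k x y + 2 * C * \<bar>t - s\<bar>"
    using iter_mix_dist[OF assms(6,8), of a k] iter_mix_dist[OF assms(5,7), of a k] by simp
  also have "\<dots> = 2 * C * (\<Sum>j\<in>param_index k. \<bar>params t x x' j - params s y y' j\<bar>)"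
    by (simp add: params_l1 algebra_simps)
  finally show ?thesis .
qed

(* The ray set of a simplex image is separable: the points whose mixing weight is at least 1/(j+1)
   depend Lipschitz-continuously on their parameters. *)
lemma separable_ray_set: "\<exists>D. countable D \<and> ray_set (simplex_image a k) \<subseteq> closure D"
proof -
  define P where "P j w v \<longleftrightarrow> (\<exists>t x x'. 1 / Suc j \<le> t \<and> t \<le> 1 \<and> x \<in> cube \<and> x' \<in> cube \<and>
      mix t w (iter_mix a k x) = iter_mix a k x' \<and> v = params t x x')" for j w v
  define T where "T j = {w. \<exists>v. P j w v}" for j :: nat
  have level: "\<exists>D. countable D \<and> T j \<subseteq> closure D" for j
  proof (rule separable_by_parameters[OF finite_param_index, where P = "P j"])
    show "\<exists>v. P j w v" if "w \<in> T j" for w using that unfolding T_def by blast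
    show "dist w w' \<le> (2 * C * Suc j) * (\<Sum>i\<in>param_index k. \<bar>v i - v' i\<bar>)"
      if "w \<in> T j" "w' \<in> T j" and Pw: "P j w v" and Pw': "P j w' v'" for w w' v v'
    proof -
      obtain t x x' where p: "1 / Suc j \<le> t" "t \<le> 1" "x \<in> cube" "x' \<in> cube"
          "mix t w (iter_mix a k x) = iter_mix a k x'" "v = params t x x'"
        using Pw unfolding P_def by blast
      obtain s y y' where p': "1 / Suc j \<le> s" "s \<le> 1" "y \<in> cube" "y' \<in> cube"
          "mix s w' (iter_mix a k y) = iter_mix a k y'" "v' = params s y y'"
        using Pw' unfolding P_def by blast
      have "0 < 1 / real (Suc j)" by simp
      then have t: "0 < t" "0 \<le> s" using p(1) p'(1) by linarith+
      have bound: "t * dist w w' \<le> 2 * C * (\<Sum>i\<in>param_index k. \<bar>v i - v' i\<bar>)"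
        unfolding p(6) p'(6) by (rule ray_param_dist[OF t(1) p(2) t(2) p'(2) p(3,4) p'(3,4) p(5) p'(5)])
      have "1 \<le> Suc j * t" using p(1) by (simp add: field_simps)
      then have "dist w w' \<le> Suc j * t * dist w w'" by (simp add: mult_le_cancel_right1)
      also have "\<dots> \<le> Suc j * (2 * C * (\<Sum>i\<in>param_index k. \<bar>v i - v' i\<bar>))"
        using bound by (simp add: mult.assoc mult_left_mono)
      finally show ?thesis by (simp add: algebra_simps)
    qed
  qed
  have "ray_set (simplex_image a k) \<subseteq> (\<Union>j. T j)"
  proof
    fix w assume "w \<in> ray_set (simplex_image a k)"
    then obtain t p where "0 < t" "t \<le> 1" "p \<in> simplex_image a k" "mix t w p \<in> simplex_image a k"
      unfolding ray_set_def by blast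
    then obtain x x' where tx: "0 < t" "t \<le> 1" "x \<in> cube" "x' \<in> cube" "mix t w (iter_mix a k x) = iter_mix a k x'"
      unfolding simplex_image_def by (metis imageE)
    obtain j :: nat where "1 / Suc j < t" using tx(1) by (rule nat_approx_posE)
    then have "P j w (params t x x')" unfolding P_def using tx by (intro exI conjI) (auto intro: less_imp_le)
    then show "w \<in> (\<Union>j. T j)" unfolding T_def by blast
  qed
  moreover obtain D where "countable D" "(\<Union>j. T j) \<subseteq> closure D"
    using separable_countable_union[of T, OF level] by (elim exE conjE)
  ultimately show ?thesis by (intro exI[of _ D] conjI) auto
qed

definition generic :: "(nat \<Rightarrow> 'a) \<Rightarrow> nat \<Rightarrow> bool" where
  "generic a N \<longleftrightarrow> (\<forall>k<N. a (Suc k) \<notin> ray_set (simplex_image a k))"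

lemma exists_generic:
  assumes nonsep: "\<And>D :: 'a set. countable D \<Longrightarrow> \<exists>w. w \<notin> closure D"
  shows "\<exists>a. generic a N"
proof (induction N)
  case 0 show ?case by (simp add: generic_def)
next
  case (Suc N)
  then obtain a where a: "generic a N" by blast
  obtain D where D: "countable D" "ray_set (simplex_image a N) \<subseteq> closure D"
    using separable_ray_set by blast
  obtain w where w: "w \<notin> closure D" using nonsep[OF D(1)] by blast
  define a' where "a' = a(Suc N := w)"
  have same: "simplex_image a' k = simplex_image a k" if "k \<le> N" for k
    unfolding simplex_image_def using that by (intro image_cong refl iter_mix_cong) (auto simp: a'_def)
  have "a' (Suc k) \<notin> ray_set (simplex_image a' k)" if "k < Suc N" for k
  proof (cases "k = N")
    case True
    then show ?thesis using same[of N] w D(2) by (auto simp: a'_def)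
  next
    case False
    then show ?thesis using a same[of k] that by (simp add: generic_def a'_def)
  qed
  then show ?case unfolding generic_def by blast
qed

lemma face_step:
  assumes new_vertex: "a (Suc N) \<notin> ray_set (simplex_image a N)"
    and top: "y \<in> face a (Suc N) (Suc N)" and "i \<le> N" and y_face: "y \<in> face a (Suc N) i"
  shows "y \<in> face a N i"
proof -
  from top obtain x where "x \<in> cube" "weight (Suc N) (Suc N) x = 0" "y = iter_mix a (Suc N) x"
    unfolding face_def by blast
  then have y_simplex: "y \<in> simplex_image a N" by (simp add: weight_last mix_0 simplex_image_def)
  from y_face obtain x' where x': "x' \<in> cube" "weight (Suc N) i x' = 0" "y = iter_mix a (Suc N) x'"
    unfolding face_def by blast
  have "x' N = 0"
  proof (rule ccontr)
    assume "x' N \<noteq> 0"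
    then have "0 < x' N" "x' N \<le> 1" using x'(1) by (auto simp: cube_def less_le)
    moreover have "iter_mix a N x' \<in> simplex_image a N" using x'(1) by (simp add: simplex_image_def)
    moreover have "mix (x' N) (a (Suc N)) (iter_mix a N x') \<in> simplex_image a N" using x'(3) y_simplex by simp
    ultimately have "a (Suc N) \<in> ray_set (simplex_image a N)" unfolding ray_set_def by blast
    then show False using new_vertex by contradiction
  qed
  then show ?thesis using x' \<open>i \<le> N\<close> unfolding face_def by (auto simp: weight_Suc mix_0)
qed

lemma generic_faces_no_common_point: "generic a N \<Longrightarrow> \<exists>i\<le>N. y \<notin> face a N i"
proof (induction N arbitrary: y)
  case 0
  have "weight 0 0 x \<noteq> 0" for x by (simp add: weight_def)
  then show ?case by (auto simp: face_def)
next
  case (Suc N)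
  show ?case
  proof (rule ccontr)
    assume "\<not> (\<exists>i\<le>Suc N. y \<notin> face a (Suc N) i)"
    then have in_all: "y \<in> face a (Suc N) i" if "i \<le> Suc N" for i using that by auto
    have "a (Suc N) \<notin> ray_set (simplex_image a N)" using Suc.prems by (simp add: generic_def)
    then have "y \<in> face a N i" if "i \<le> N" for i using face_step in_all that by simp
    moreover have "generic a N" using Suc.prems by (simp add: generic_def)
    ultimately show False using Suc.IH by blast
  qed
qed

lemma simplex_cover_order:
  assumes "finite \<V>" and opn: "\<And>V. V \<in> \<V> \<Longrightarrow> open V" and cover: "simplex_image a N \<subseteq> \<Union>\<V>"
    and avoid: "\<And>V. V \<in> \<V> \<Longrightarrow> \<exists>i\<le>N. V \<inter> face a N i = {}"
  shows "\<exists>z. Suc N \<le> card {V\<in>\<V>. z \<in> V}"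
proof -
  obtain \<eta> where \<eta>: "0 < \<eta>" "\<And>y. y \<in> simplex_image a N \<Longrightarrow> \<exists>V\<in>\<V>. ball y \<eta> \<subseteq> V"
    using Heine_Borel_lemma[OF compact_simplex_image cover opn] by blast
  define W where "W V = {x \<in> cube. iter_mix a N x \<in> V}" for V
  have "\<exists>x\<in>cube. Suc N \<le> card {V\<in>\<V>. x \<in> W V}"
  proof (rule cube_cover_order[OF \<open>finite \<V>\<close>])
    show "0 < \<eta> / (2 * C + 1)" using \<eta>(1) C_nonneg by simp
    show "\<exists>V\<in>\<V>. \<forall>y\<in>cube. l1dist N x y < \<eta> / (2 * C + 1) \<longrightarrow> y \<in> W V" if x: "x \<in> cube" for x
    proof -
      have "iter_mix a N x \<in> simplex_image a N" using x by (simp add: simplex_image_def)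
      then obtain V where V: "V \<in> \<V>" "ball (iter_mix a N x) \<eta> \<subseteq> V" using \<eta>(2) by blast
      have "iter_mix a N y \<in> V" if "y \<in> cube" "l1dist N x y < \<eta> / (2 * C + 1)" for y
      proof -
        have "dist (iter_mix a N x) (iter_mix a N y) \<le> 2 * C * l1dist N x y"
          using x that(1) by (rule iter_mix_dist)
        also have "\<dots> \<le> (2 * C + 1) * l1dist N x y"
          using l1dist_nonneg[of N x y] by (simp add: algebra_simps)
        also have "\<dots> < \<eta>" using that(2) C_nonneg by (simp add: field_simps)
        finally show ?thesis using V(2) by auto
      qed
      then show ?thesis using V(1) by (auto simp: W_def)
    qed
    show "\<exists>i\<le>N. \<forall>x\<in>cube. weight N i x = 0 \<longrightarrow> x \<notin> W V" if V: "V \<in> \<V>" for V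
    proof -
      obtain i where "i \<le> N" "V \<inter> face a N i = {}" using avoid[OF V] by blast
      then show ?thesis by (auto simp: W_def face_def)
    qed
  qed
  then obtain x where "x \<in> cube" "Suc N \<le> card {V\<in>\<V>. x \<in> W V}" by blast
  moreover have "{V\<in>\<V>. x \<in> W V} = {V\<in>\<V>. iter_mix a N x \<in> V}" using \<open>x \<in> cube\<close> by (auto simp: W_def)
  ultimately show ?thesis by auto
qed

(* The complements of the n+2 faces of a generic simplex form a finite open cover of X; by the
   previous lemma none of its open refinements has order at most n. *)
lemma generic_not_covering_dim:
  assumes "generic a (Suc n)"
  shows "\<not> covering_dim_le (euclidean :: 'a topology) n"
proof
  assume dim: "covering_dim_le (euclidean :: 'a topology) n"
  define N where "N = Suc n"
  define \<U> where "\<U> = (\<lambda>i. - face a N i) ` {..N}"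
  have cover: "\<Union>\<U> = topspace euclidean"
    using generic_faces_no_common_point[OF assms[folded N_def]] by (auto simp: \<U>_def)
  have opn: "openin euclidean U" if "U \<in> \<U>" for U
    using that closed_face by (auto simp: \<U>_def)
  have fin: "finite \<U>" by (simp add: \<U>_def)
  obtain \<V> where \<V>: "finite \<V>" "\<And>V. V \<in> \<V> \<Longrightarrow> openin euclidean V" "\<Union>\<V> = topspace euclidean"
      "\<And>V. V \<in> \<V> \<Longrightarrow> \<exists>U\<in>\<U>. V \<subseteq> U" "\<And>x. x \<in> topspace euclidean \<Longrightarrow> card {V\<in>\<V>. x \<in> V} \<le> n + 1"
    by (rule covering_dim_leE[OF dim fin opn cover]) (assumption | rule that)+
  have "\<exists>z. Suc N \<le> card {V\<in>\<V>. z \<in> V}"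
  proof (rule simplex_cover_order[OF \<V>(1)])
    show "open V" if "V \<in> \<V>" for V using \<V>(2)[OF that] by simp
    show "simplex_image a N \<subseteq> \<Union>\<V>" using \<V>(3) by simp
    show "\<exists>i\<le>N. V \<inter> face a N i = {}" if "V \<in> \<V>" for V
      using \<V>(4)[OF that] by (auto simp: \<U>_def)
  qed
  then obtain z where "Suc N \<le> card {V\<in>\<V>. z \<in> V}" by blast
  then show False using \<V>(5)[of z] by (simp add: N_def)
qed

end

(* Main theorem: otherwise X would be non-separable, hence would carry a generic sequence of
   length n+2, which is incompatible with covering dimension at most n. *)
theorem theorem2p9:
  fixes \<gamma> :: "nat \<Rightarrow> (nat \<Rightarrow> real) \<Rightarrow> (nat \<Rightarrow> 'a::metric_space) \<Rightarrow> 'a"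
  assumes "bounded (UNIV :: 'a set)"
    and "complete (UNIV :: 'a set)"
    and "convex_like_structure \<gamma>"
    and "finite_covering_dim (euclidean :: 'a topology)"
  shows "second_countable (euclidean :: 'a topology)"
proof (rule ccontr)
  assume not_sc: "\<not> second_countable (euclidean :: 'a topology)"
  interpret convex_like \<gamma> by (rule convex_like.intro) (rule assms(3))
  have nonsep: "\<exists>w. w \<notin> closure D" if "countable D" for D :: "'a set"
    using separable_imp_second_countable[OF that] not_sc by auto
  obtain n where "covering_dim_le (euclidean :: 'a topology) n"
    using assms(4) unfolding finite_covering_dim_def by blast
  moreover obtain a where "generic a (Suc n)" using exists_generic[OF nonsep] by blast
  ultimately show False using generic_not_covering_dim by blast
qed

end
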